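(* Let $W$ be a (1-safe) DAW-net, $\mathrm{bc}(W)$ its $\mathcal{BC}$ encoding, and $\mathit{TS}_{\mathrm{bc}(W)}=(\mathcal{A},S,S_0,\delta)$ the transition system it induces. Then (1) $S_0$ is a singleton $\{s_0\}$; and (2) if $(s,A,s')\in\delta$ then $|A|=1$.
   Context: **DAW-nets.** Data model $\mathcal{D}=(\mathcal{V},\Delta,\mathrm{dm},\mathrm{ord})$ (variables; finite domains via total surjective $\mathrm{dm}$; partial orders on some domains); assignments are partial functions $\eta$ with $\eta(v)\in\mathrm{dm}(v)$; guards $\Phi::=\mathit{true}\mid\mathrm{def}(v)\mid t_1=t_2\mid t_1\le t_2\mid\neg\Phi\mid\Phi\wedge\Phi$. A DAW-net $W=\langle\mathcal{D},(P,T,F),\mathrm{wr},\mathrm{gd}\rangle$: a workflow Petri net with places $\mathit{start},\mathit{sink}$, presets ${}^\bullet t$, postsets $t^\bullet$; partial functions $\mathrm{wr}(t)$ with $\mathrm{wr}(t)(v)\subseteq\mathrm{dm}(v)$; guards $\mathrm{gd}(t)$. $\mathcal{V}'$: finite set of variables of $W$; $\mathrm{adm}(v)=\bigcup_t\mathrm{wr}(t)(v)$. $W$ is assumed 1-safe. **$\mathcal{BC}$ semantics.** Fluents have finite domains; laws: dynamic "$A_0$ after $A'_1,\dots,A'_n$ ifcons $A_{n+1},\dots,A_m$" ($A_0$ an atom $f=v$ or false; $A'_j$ atoms or action constants), static "$A_0$ if ... ifcons ...", "initially $f=v$". $P_\ell(B)$ is the disjunctive program (classical negation $\neg$, default negation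 $\sim$) containing: static laws as $i{:}A_0\leftarrow i{:}A_1,\dots,i{:}A_n,\sim\neg(i{:}A_{n+1}),\dots,\sim\neg(i{:}A_m)$, $0\le i\le\ell$; dynamic laws as $i{+}1{:}A_0\leftarrow i{:}A'_1,\dots,i{:}A'_n,\sim\neg(i{+}1{:}A_{n+1}),\dots,\sim\neg(i{+}1{:}A_m)$, $0\le i<\ell$ (constraints if $A_0$ is false); facts $0{:}f=v$ for "initially $f=v$"; $0{:}f=v\vee\neg(0{:}f=v)$ for all fluents and values; $i{:}a\vee\neg(i{:}a)$ for action constants, $i<\ell$; and for $i\le\ell$ and fluent $f$ with domain $v_1,\dots,v_k$: $\leftarrow\sim(i{:}f=v_1),\dots,\sim(i{:}f=v_k)$ and $\neg(i{:}f=v)\leftarrow i{:}f=w$ ($v\ne w$). For a stable model (answer set) $X$ of $P_\ell(B)$ put $\sigma_i(X)=\{f\mapsto o\mid(i{:}f=o)\in X\}$. $\mathit{TS}_B=(\mathcal{A},S,S_0,\delta)$: $S_0=\{\sigma_0(X)\mid X$ stable model of $P_0(B)\}$; $S,\delta$ least with $S_0\subseteq S$ and, whenever $X$ is a stable model of $P_{\ell+1}(B)$ ($\ell\ge0$) with $\sigma_\ell(X)\in S$, $\sigma_{\ell+1}(X)\in S$ and $(\sigma_\ell(X),\{a\mid(\ell{:}a)\in X\},\sigma_{\ell+1}(X))\in\delta$. **The encoding $\mathrm{bc}(W)$.** Fluents $v\in\mathcal{V}'$ with domain $\mathrm{adm}(v)\cup\{\mathrm{null}\}$, Boolean fluents $p\in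 P$ and $\mathit{trans}$; action constants $t\in T$. Laws: "$v=o$ after $v=o$ ifcons $v=o$"; "$p=o$ after $p=o$ ifcons $p=o$"; for each $t$: "$p=\mathrm{false}$ after $t$" ($p\in{}^\bullet t\setminus t^\bullet$), "$p=\mathrm{true}$ after $t$" ($p\in t^\bullet\setminus{}^\bullet t$), "$v=d$ after $t$ ifcons $v=d$" ($d\in\mathrm{wr}(t)(v)$), "$v=\mathrm{null}$ after $t$" ($\mathrm{wr}(t)(v)=\emptyset$), "false after $t$ ifcons $v=d$" ($\mathrm{wr}(t)(v)\neq\emptyset$, $d\in\{\mathrm{null}\}\cup\mathrm{adm}(v)\setminus\mathrm{wr}(t)(v)$), "false after $t,s$" ($t\ne s$), "false after $t,p=\mathrm{false}$" ($p\in{}^\bullet t$), "$\mathit{trans}=\mathrm{true}$ after $t$"; "initially $\mathit{start}=\mathrm{true}$", "initially $p=\mathrm{false}$" ($p\ne\mathit{start}$), "initially $v=\mathrm{null}$", "initially $\mathit{trans}=\mathrm{true}$"; and for each $t$ with $\mathrm{gd}(t)\not\equiv\mathit{true}$, for a chosen formula $\bigvee_k t^k_1\wedge\dots\wedge t^k_{n_k}$ equivalent to $\neg\mathrm{gd}(t)$ with terms $v=o$ or $\neg\mathrm{def}(v)$, the laws "false after $t,[\![t^k_1]\!],\dots,[\![t^k_{n_k}]\!]$", where $[\![v=o]\!]=(v=o)$, $[\![\neg\mathrm{def}(v)]\!]=(v=\mathrm{null})$. *)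

theory Defs
  imports Main
begin

section \<open>DAW-nets\<close>

datatype ('v,'d) gterm = TVar 'v | TConst 'd

datatype ('v,'d) guard =
    GTrue
  | GDef 'v
  | GEq "('v,'d) gterm" "('v,'d) gterm"
  | GLe "('v,'d) gterm" "('v,'d) gterm"
  | GNot "('v,'d) guard"
  | GAnd "('v,'d) guard" "('v,'d) guard"

datatype ('p,'t) node = Pl 'p | Tr 't

record ('v,'d,'p,'t) dawnet =
  dvars  :: "'v set"
  dm     :: "'v \<Rightarrow> 'd set"                  \<comment> \<open>domain of each variable; \<Delta> = dm ` dvars\<close>
  dord   :: "'d set \<Rightarrow> ('d \<times> 'd) set option"
  places :: "'p set"
  transs :: "'t set"
  flow   :: "(('p,'t) node \<times> ('p,'t) node) set"
  pstart :: "'p"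
  psink  :: "'p"
  wr     :: "'t \<Rightarrow> 'v \<Rightarrow> 'd set option"
  gd     :: "'t \<Rightarrow> ('v,'d) guard"

definition preset :: "('v,'d,'p,'t) dawnet \<Rightarrow> 't \<Rightarrow> 'p set" where
  "preset W t = {p. (Pl p, Tr t) \<in> flow W}"

definition postset :: "('v,'d,'p,'t) dawnet \<Rightarrow> 't \<Rightarrow> 'p set" where
  "postset W t = {p. (Tr t, Pl p) \<in> flow W}"

fun gterm_val :: "('v \<Rightarrow> 'd option) \<Rightarrow> ('v,'d) gterm \<Rightarrow> 'd option" where
  "gterm_val \<eta> (TVar v) = \<eta> v"
| "gterm_val \<eta> (TConst d) = Some d"

text \<open>Comparisons involving an undefined
  variable are false; \<open>t1 \<le> t2\<close> holds iff both values lie in an ordered domain of the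
  data model and are related by its order.\<close>
fun gholds :: "('v,'d,'p,'t) dawnet \<Rightarrow> ('v \<Rightarrow> 'd option) \<Rightarrow> ('v,'d) guard \<Rightarrow> bool" where
  "gholds W \<eta> GTrue = True"
| "gholds W \<eta> (GDef v) = (\<eta> v \<noteq> None)"
| "gholds W \<eta> (GEq a b) = (\<exists>x y. gterm_val \<eta> a = Some x \<and> gterm_val \<eta> b = Some y \<and> x = y)"
| "gholds W \<eta> (GLe a b) = (\<exists>x y D r. gterm_val \<eta> a = Some x \<and> gterm_val \<eta> b = Some y
        \<and> D \<in> dm W ` dvars W \<and> dord W D = Some r \<and> x \<in> D \<and> y \<in> D \<and> (x, y) \<in> r)"
| "gholds W \<eta> (GNot g) = (\<not> gholds W \<eta> g)"
| "gholds W \<eta> (GAnd g h) = (gholds W \<eta> g \<and> gholds W \<eta> h)"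

fun gvars :: "('v,'d) guard \<Rightarrow> 'v set" where
  "gvars GTrue = {}"
| "gvars (GDef v) = {v}"
| "gvars (GEq a b) = {v. TVar v = a \<or> TVar v = b}"
| "gvars (GLe a b) = {v. TVar v = a \<or> TVar v = b}"
| "gvars (GNot g) = gvars g"
| "gvars (GAnd g h) = gvars g \<union> gvars h"

definition assignment :: "('v,'d,'p,'t) dawnet \<Rightarrow> ('v \<Rightarrow> 'd option) \<Rightarrow> bool" where
  "assignment W \<eta> \<longleftrightarrow> dom \<eta> \<subseteq> dvars W \<and> (\<forall>v d. \<eta> v = Some d \<longrightarrow> d \<in> dm W v)"

definition nodes :: "('v,'d,'p,'t) dawnet \<Rightarrow> ('p,'t) node set" where
  "nodes W = Pl ` places W \<union> Tr ` transs W"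

definition daw_net :: "('v,'d,'p,'t) dawnet \<Rightarrow> bool" where
  "daw_net W \<longleftrightarrow>
     \<comment> \<open>data model\<close>
     finite (dvars W) \<and> (\<forall>v \<in> dvars W. finite (dm W v)) \<and>
     (\<forall>D r. dord W D = Some r \<longrightarrow> D \<in> dm W ` dvars W \<and> partial_order_on D r) \<and>
     \<comment> \<open>workflow Petri net\<close>
     finite (places W) \<and> finite (transs W) \<and>
     pstart W \<in> places W \<and> psink W \<in> places W \<and>
     flow W \<subseteq> (Pl ` places W \<times> Tr ` transs W) \<union> (Tr ` transs W \<times> Pl ` places W) \<and>
     (\<forall>x. (x, Pl (pstart W)) \<notin> flow W) \<and> (\<forall>x. (Pl (psink W), x) \<notin> flow W) \<and>
     (\<forall>x \<in> nodes W. (Pl (pstart W), x) \<in> (flow W)\<^sup>* \<and> (x, Pl (psink W)) \<in> (flow W)\<^sup>*) \<and>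
     \<comment> \<open>writes and guards\<close>
     (\<forall>t \<in> transs W. dom (wr W t) \<subseteq> dvars W \<and>
        (\<forall>v D. wr W t v = Some D \<longrightarrow> D \<subseteq> dm W v) \<and> gvars (gd W t) \<subseteq> dvars W)"

type_synonym ('v,'d,'p) dstate = "('p \<Rightarrow> nat) \<times> ('v \<Rightarrow> 'd option)"

definition fires :: "('v,'d,'p,'t) dawnet \<Rightarrow> ('v,'d,'p) dstate \<Rightarrow> 't \<Rightarrow> ('v,'d,'p) dstate \<Rightarrow> bool" where
  "fires W s t s' \<longleftrightarrow> (case (s, s') of ((M, \<eta>), (M', \<eta>')) \<Rightarrow>
     t \<in> transs W \<and> (\<forall>p \<in> preset W t. M p \<ge> 1) \<and> gholds W \<eta> (gd W t) \<and>
     (\<forall>p. M' p = M p - (if p \<in> preset W t then 1 else 0) + (if p \<in> postset W t then 1 else 0)) \<and>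
     (\<forall>v. (wr W t v = None \<longrightarrow> \<eta>' v = \<eta> v) \<and>
          (wr W t v = Some {} \<longrightarrow> \<eta>' v = None) \<and>
          (\<forall>D. wr W t v = Some D \<and> D \<noteq> {} \<longrightarrow> (\<exists>d \<in> D. \<eta>' v = Some d))))"

definition init_dstate :: "('v,'d,'p,'t) dawnet \<Rightarrow> ('v,'d,'p) dstate" where
  "init_dstate W = ((\<lambda>p. if p = pstart W then 1 else 0), Map.empty)"

inductive_set reachable :: "('v,'d,'p,'t) dawnet \<Rightarrow> ('v,'d,'p) dstate set" for W where
  init: "init_dstate W \<in> reachable W"
| step: "s \<in> reachable W \<Longrightarrow> fires W s t s' \<Longrightarrow> s' \<in> reachable W"

definition one_safe :: "('v,'d,'p,'t) dawnet \<Rightarrow> bool" where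
  "one_safe W \<longleftrightarrow> (\<forall>M \<eta> p. (M, \<eta>) \<in> reachable W \<longrightarrow> M p \<le> 1)"

section \<open>The action language BC and its transition system\<close>

datatype ('f,'val,'a) bodyelem = BF 'f 'val | BA 'a

datatype ('f,'val,'a) law =
    Static "('f \<times> 'val) option" "('f \<times> 'val) list" "('f \<times> 'val) list"
      \<comment> \<open>head (None = false), body atoms, ifcons atoms\<close>
  | Dynamic "('f \<times> 'val) option" "('f,'val,'a) bodyelem list" "('f \<times> 'val) list"
      \<comment> \<open>head (None = false), after-part, ifcons atoms\<close>
  | Initially 'f 'val

record ('f,'val,'a) bcdesc =
  fluents :: "'f set"
  fdom    :: "'f \<Rightarrow> 'val set"
  actions :: "'a set"
  laws    :: "('f,'val,'a) law set"

datatype ('f,'val,'a) atom = FA nat 'f 'val | AA nat 'a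

datatype ('f,'val,'a) lit = Pos "('f,'val,'a) atom" | Neg "('f,'val,'a) atom"

text \<open>Disjunctive rule: head (disjunction of literals, empty = constraint),
  positive body, default-negated body.\<close>
datatype 'l rule = Rule (rhead: "'l set") (rpos: "'l set") (rneg: "'l set")

fun lhead :: "nat \<Rightarrow> ('f \<times> 'val) option \<Rightarrow> ('f,'val,'a) lit set" where
  "lhead i None = {}"
| "lhead i (Some (f, v)) = {Pos (FA i f v)}"

definition fpos :: "nat \<Rightarrow> ('f \<times> 'val) list \<Rightarrow> ('f,'val,'a) lit set" where
  "fpos i xs = (\<lambda>(f, v). Pos (FA i f v)) ` set xs"

definition fnegcl :: "nat \<Rightarrow> ('f \<times> 'val) list \<Rightarrow> ('f,'val,'a) lit set" where
  "fnegcl i xs = (\<lambda>(f, v). Neg (FA i f v)) ` set xs"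

fun belit :: "nat \<Rightarrow> ('f,'val,'a) bodyelem \<Rightarrow> ('f,'val,'a) lit" where
  "belit i (BF f v) = Pos (FA i f v)"
| "belit i (BA a) = Pos (AA i a)"

definition prog :: "nat \<Rightarrow> ('f,'val,'a) bcdesc \<Rightarrow> ('f,'val,'a) lit rule set" where
  "prog l B =
     {Rule (lhead i h) (fpos i b) (fnegcl i c) | i h b c. i \<le> l \<and> Static h b c \<in> laws B}
   \<union> {Rule (lhead (Suc i) h) (belit i ` set b) (fnegcl (Suc i) c) | i h b c.
        i < l \<and> Dynamic h b c \<in> laws B}
   \<union> {Rule {Pos (FA 0 f v)} {} {} | f v. Initially f v \<in> laws B}
   \<union> {Rule {Pos (FA 0 f v), Neg (FA 0 f v)} {} {} | f v. f \<in> fluents B \<and> v \<in> fdom B f}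
   \<union> {Rule {Pos (AA i a), Neg (AA i a)} {} {} | i a. i < l \<and> a \<in> actions B}
   \<union> {Rule {} {} ((\<lambda>v. Pos (FA i f v)) ` fdom B f) | i f. i \<le> l \<and> f \<in> fluents B}
   \<union> {Rule {Neg (FA i f v)} {Pos (FA i f w)} {} | i f v w.
        i \<le> l \<and> f \<in> fluents B \<and> v \<in> fdom B f \<and> w \<in> fdom B f \<and> v \<noteq> w}"

definition reduct :: "'l rule set \<Rightarrow> 'l set \<Rightarrow> 'l rule set" where
  "reduct \<Pi> X = {Rule (rhead r) (rpos r) {} | r. r \<in> \<Pi> \<and> rneg r \<inter> X = {}}"

definition is_model :: "'l rule set \<Rightarrow> 'l set \<Rightarrow> bool" where
  "is_model \<Pi> Y \<longleftrightarrow> (\<forall>r \<in> \<Pi>. rpos r \<subseteq> Y \<longrightarrow> rhead r \<inter> Y \<noteq> {})"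

definition consistent :: "('f,'val,'a) lit set \<Rightarrow> bool" where
  "consistent X \<longleftrightarrow> (\<forall>a. \<not> (Pos a \<in> X \<and> Neg a \<in> X))"

definition stable_model :: "('f,'val,'a) lit rule set \<Rightarrow> ('f,'val,'a) lit set \<Rightarrow> bool" where
  "stable_model \<Pi> X \<longleftrightarrow> consistent X \<and> is_model (reduct \<Pi> X) X \<and>
     (\<forall>Y. Y \<subset> X \<longrightarrow> \<not> is_model (reduct \<Pi> X) Y)"

definition sigma :: "nat \<Rightarrow> ('f,'val,'a) lit set \<Rightarrow> ('f \<times> 'val) set" where
  "sigma i X = {(f, x). Pos (FA i f x) \<in> X}"

definition acts :: "nat \<Rightarrow> ('f,'val,'a) lit set \<Rightarrow> 'a set" where
  "acts i X = {a. Pos (AA i a) \<in> X}"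

definition init_states :: "('f,'val,'a) bcdesc \<Rightarrow> ('f \<times> 'val) set set" where
  "init_states B = {sigma 0 X | X. stable_model (prog 0 B) X}"

inductive_set ts_states :: "('f,'val,'a) bcdesc \<Rightarrow> ('f \<times> 'val) set set" for B where
  init: "s \<in> init_states B \<Longrightarrow> s \<in> ts_states B"
| step: "stable_model (prog (Suc l) B) X \<Longrightarrow> sigma l X \<in> ts_states B \<Longrightarrow>
         sigma (Suc l) X \<in> ts_states B"

definition ts_delta :: "('f,'val,'a) bcdesc \<Rightarrow> (('f \<times> 'val) set \<times> 'a set \<times> ('f \<times> 'val) set) set" where
  "ts_delta B = {(sigma l X, acts l X, sigma (Suc l) X) | l X.
                   stable_model (prog (Suc l) B) X \<and> sigma l X \<in> ts_states B}"

section \<open>The encoding bc(W)\<close>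

datatype ('v,'p) fluent = VarF 'v | PlaceF 'p | TransF
datatype 'd fval = Null | BoolV bool | Val 'd

text \<open>Terms of the chosen DNF for the negated guard: \<open>v = o\<close> or \<open>\<not>def(v)\<close>.\<close>
datatype ('v,'d) dlit = DEq 'v 'd | DUndef 'v

fun dlit_holds :: "('v \<Rightarrow> 'd option) \<Rightarrow> ('v,'d) dlit \<Rightarrow> bool" where
  "dlit_holds \<eta> (DEq v x) = (\<eta> v = Some x)"
| "dlit_holds \<eta> (DUndef v) = (\<eta> v = None)"

fun dlit_enc :: "('v,'d) dlit \<Rightarrow> (('v,'p) fluent, 'd fval, 't) bodyelem" where
  "dlit_enc (DEq v x) = BF (VarF v) (Val x)"
| "dlit_enc (DUndef v) = BF (VarF v) Null"

definition guard_trivial :: "('v,'d,'p,'t) dawnet \<Rightarrow> 't \<Rightarrow> bool" where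
  "guard_trivial W t \<longleftrightarrow> (\<forall>\<eta>. assignment W \<eta> \<longrightarrow> gholds W \<eta> (gd W t))"

definition valid_dnf :: "('v,'d,'p,'t) dawnet \<Rightarrow> ('t \<Rightarrow> ('v,'d) dlit list list) \<Rightarrow> bool" where
  "valid_dnf W dnf \<longleftrightarrow> (\<forall>t \<in> transs W. \<not> guard_trivial W t \<longrightarrow>
     (\<forall>\<eta>. assignment W \<eta> \<longrightarrow>
        ((\<exists>c \<in> set (dnf t). \<forall>l \<in> set c. dlit_holds \<eta> l) \<longleftrightarrow> \<not> gholds W \<eta> (gd W t))))"

definition vars' :: "('v,'d,'p,'t) dawnet \<Rightarrow> 'v set" where
  "vars' W = {v. \<exists>t \<in> transs W. v \<in> dom (wr W t) \<or> v \<in> gvars (gd W t)}"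

definition adm :: "('v,'d,'p,'t) dawnet \<Rightarrow> 'v \<Rightarrow> 'd set" where
  "adm W v = \<Union> {D. \<exists>t \<in> transs W. wr W t v = Some D}"

definition bc_fdom :: "('v,'d,'p,'t) dawnet \<Rightarrow> ('v,'p) fluent \<Rightarrow> 'd fval set" where
  "bc_fdom W f = (case f of VarF v \<Rightarrow> Val ` adm W v \<union> {Null} | _ \<Rightarrow> {BoolV True, BoolV False})"

definition bc_laws :: "('v,'d,'p,'t) dawnet \<Rightarrow> ('t \<Rightarrow> ('v,'d) dlit list list)
     \<Rightarrow> (('v,'p) fluent, 'd fval, 't) law set" where
  "bc_laws W dnf =
     {Dynamic (Some (VarF v, x)) [BF (VarF v) x] [(VarF v, x)] | v x.
        v \<in> vars' W \<and> x \<in> bc_fdom W (VarF v)}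
   \<union> {Dynamic (Some (PlaceF p, x)) [BF (PlaceF p) x] [(PlaceF p, x)] | p x.
        p \<in> places W \<and> x \<in> {BoolV True, BoolV False}}
   \<union> {Dynamic (Some (PlaceF p, BoolV False)) [BA t] [] | t p.
        t \<in> transs W \<and> p \<in> preset W t - postset W t}
   \<union> {Dynamic (Some (PlaceF p, BoolV True)) [BA t] [] | t p.
        t \<in> transs W \<and> p \<in> postset W t - preset W t}
   \<union> {Dynamic (Some (VarF v, Val d)) [BA t] [(VarF v, Val d)] | t v D d.
        t \<in> transs W \<and> wr W t v = Some D \<and> d \<in> D}
   \<union> {Dynamic (Some (VarF v, Null)) [BA t] [] | t v.
        t \<in> transs W \<and> wr W t v = Some {}}
   \<union> {Dynamic None [BA t] [(VarF v, d)] | t v D d.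
        t \<in> transs W \<and> wr W t v = Some D \<and> D \<noteq> {} \<and> d \<in> ({Null} \<union> Val ` adm W v) - Val ` D}
   \<union> {Dynamic None [BA t, BA s] [] | t s. t \<in> transs W \<and> s \<in> transs W \<and> t \<noteq> s}
   \<union> {Dynamic None [BA t, BF (PlaceF p) (BoolV False)] [] | t p.
        t \<in> transs W \<and> p \<in> preset W t}
   \<union> {Dynamic (Some (TransF, BoolV True)) [BA t] [] | t. t \<in> transs W}
   \<union> {Initially (PlaceF (pstart W)) (BoolV True)}
   \<union> {Initially (PlaceF p) (BoolV False) | p. p \<in> places W \<and> p \<noteq> pstart W}
   \<union> {Initially (VarF v) Null | v. v \<in> vars' W}
   \<union> {Initially TransF (BoolV True)}
   \<union> {Dynamic None (BA t # map dlit_enc c) [] | t c.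
        t \<in> transs W \<and> \<not> guard_trivial W t \<and> c \<in> set (dnf t)}"

definition bc :: "('v,'d,'p,'t) dawnet \<Rightarrow> ('t \<Rightarrow> ('v,'d) dlit list list)
     \<Rightarrow> (('v,'p) fluent, 'd fval, 't) bcdesc" where
  "bc W dnf = \<lparr> fluents = VarF ` vars' W \<union> PlaceF ` places W \<union> {TransF},
                fdom = bc_fdom W,
                actions = transs W,
                laws = bc_laws W dnf \<rparr>"

end

theory Submission
  imports Defs
begin

text \<open>Both claims only depend on the shape of the encoding. The \<open>initially\<close> laws fix one value
  \<open>init f\<close> per fluent; the rules \<open>\<not>(f = v) \<leftarrow> f = w\<close> together with consistency then rule
  out every other value, and the initial facts together with the negations of all other
  values form an answer set.
  (2) The fluent \<open>trans\<close> must have a value at time \<open>\<ell> + 1\<close>, and the only laws that can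
  support one are \<open>trans = true after t\<close>, so some action occurs at time \<open>\<ell>\<close>; the laws
  \<open>false after t, s\<close> forbid two.\<close>

lemma is_model_reduct_iff:
  "is_model (reduct P X) Y \<longleftrightarrow> (\<forall>r \<in> P. rneg r \<inter> X = {} \<longrightarrow> rpos r \<subseteq> Y \<longrightarrow> rhead r \<inter> Y \<noteq> {})"
  unfolding is_model_def reduct_def by fastforce

lemma stable_model_satisfies_rule:
  assumes "stable_model P X" "r \<in> P" "rneg r \<inter> X = {}" "rpos r \<subseteq> X"
  shows "rhead r \<inter> X \<noteq> {}"
  using assms unfolding stable_model_def is_model_reduct_iff by blast

lemma stable_model_supported:
  assumes sm: "stable_model P X" and "l \<in> X"
  obtains r where "r \<in> P" "rneg r \<inter> X = {}" "rpos r \<subseteq> X" "l \<in> rhead r"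
proof (rule ccontr)
  assume unsupported: "\<not> thesis"
  have "is_model (reduct P X) (X - {l})"
    unfolding is_model_reduct_iff
  proof (intro ballI impI)
    fix r assume "r \<in> P" "rneg r \<inter> X = {}" "rpos r \<subseteq> X - {l}"
    moreover from this have "l \<notin> rhead r" using unsupported that by blast
    ultimately show "rhead r \<inter> (X - {l}) \<noteq> {}"
      using stable_model_satisfies_rule[OF sm] by blast
  qed
  moreover have "X - {l} \<subset> X" using \<open>l \<in> X\<close> by blast
  ultimately show False using sm unfolding stable_model_def by blast
qed

lemma Pos_FA_in_lhead_iff: "Pos (FA j f x) \<in> lhead i h \<longleftrightarrow> h = Some (f, x) \<and> j = i"
  by (cases h) auto

lemma Pos_AA_notin_lhead: "Pos (AA j a) \<notin> lhead i h"
  by (cases h) auto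

lemma prog_dynamicI:
  assumes "i < l" "Dynamic h b c \<in> laws B"
  shows "Rule (lhead (Suc i) h) (belit i ` set b) (fnegcl (Suc i) c) \<in> prog l B"
proof -
  have "Rule (lhead (Suc i) h) (belit i ` set b) (fnegcl (Suc i) c) \<in>
      {Rule (lhead (Suc i) h) (belit i ` set b) (fnegcl (Suc i) c) | i h b c.
        i < l \<and> Dynamic h b c \<in> laws B}"
    using assms by blast
  then show ?thesis unfolding prog_def by blast
qed

lemma prog_initiallyI:
  assumes "Initially f v \<in> laws B"
  shows "Rule {Pos (FA 0 f v)} {} {} \<in> prog l B"
proof -
  have "Rule {Pos (FA 0 f v)} {} {} \<in> {Rule {Pos (FA 0 f v)} {} {} | f v. Initially f v \<in> laws B}"
    using assms by blast
  then show ?thesis unfolding prog_def by blast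
qed

lemma prog_choiceI:
  assumes "f \<in> fluents B" "v \<in> fdom B f"
  shows "Rule {Pos (FA 0 f v), Neg (FA 0 f v)} {} {} \<in> prog l B"
proof -
  have "Rule {Pos (FA 0 f v), Neg (FA 0 f v)} {} {} \<in>
      {Rule {Pos (FA 0 f v), Neg (FA 0 f v)} {} {} | f v. f \<in> fluents B \<and> v \<in> fdom B f}"
    using assms by blast
  then show ?thesis unfolding prog_def by blast
qed

lemma prog_totalI:
  assumes "i \<le> l" "f \<in> fluents B"
  shows "Rule {} {} ((\<lambda>v. Pos (FA i f v)) ` fdom B f) \<in> prog l B"
proof -
  have "Rule {} {} ((\<lambda>v. Pos (FA i f v)) ` fdom B f) \<in>
      {Rule {} {} ((\<lambda>v. Pos (FA i f v)) ` fdom B f) | i f. i \<le> l \<and> f \<in> fluents B}"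
    using assms by blast
  then show ?thesis unfolding prog_def by blast
qed

lemma prog_functionalI:
  assumes "i \<le> l" "f \<in> fluents B" "v \<in> fdom B f" "w \<in> fdom B f" "v \<noteq> w"
  shows "Rule {Neg (FA i f v)} {Pos (FA i f w)} {} \<in> prog l B"
proof -
  have "Rule {Neg (FA i f v)} {Pos (FA i f w)} {} \<in>
      {Rule {Neg (FA i f v)} {Pos (FA i f w)} {} | i f v w.
        i \<le> l \<and> f \<in> fluents B \<and> v \<in> fdom B f \<and> w \<in> fdom B f \<and> v \<noteq> w}"
    using assms by blast
  then show ?thesis unfolding prog_def by blast
qed

lemma prog_0_cases:
  assumes "r \<in> prog 0 B" "\<forall>h b c. Static h b c \<notin> laws B"
  obtains (initially) f v where "Initially f v \<in> laws B" "r = Rule {Pos (FA 0 f v)} {} {}"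
    | (choice) f v where "f \<in> fluents B" "v \<in> fdom B f"
        "r = Rule {Pos (FA 0 f v), Neg (FA 0 f v)} {} {}"
    | (total) f where "f \<in> fluents B" "r = Rule {} {} ((\<lambda>v. Pos (FA 0 f v)) ` fdom B f)"
    | (functional) f v w where "f \<in> fluents B" "v \<in> fdom B f" "w \<in> fdom B f" "v \<noteq> w"
        "r = Rule {Neg (FA 0 f v)} {Pos (FA 0 f w)} {}"
  using assms unfolding prog_def by blast

lemma prog_head_Suc_fluent:
  assumes "r \<in> prog l B" "Pos (FA (Suc i) f x) \<in> rhead r" "\<forall>h b c. Static h b c \<notin> laws B"
  obtains b c where "i < l" "Dynamic (Some (f, x)) b c \<in> laws B" "rpos r = belit i ` set b"
  using assms unfolding prog_def by (auto simp: Pos_FA_in_lhead_iff)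

lemma prog_head_action:
  assumes "r \<in> prog l B" "Pos (AA i a) \<in> rhead r"
  shows "a \<in> actions B"
  using assms unfolding prog_def by (auto simp: Pos_AA_notin_lhead)

lemma stable_model_acts_subset:
  assumes sm: "stable_model (prog l B) X"
  shows "acts i X \<subseteq> actions B"
proof
  fix a assume "a \<in> acts i X"
  then have "Pos (AA i a) \<in> X" by (simp add: acts_def)
  then obtain r where "r \<in> prog l B" "Pos (AA i a) \<in> rhead r"
    using stable_model_supported[OF sm] by metis
  then show "a \<in> actions B" by (rule prog_head_action)
qed

lemma stable_model_acts_nonempty:
  assumes sm: "stable_model (prog l B) X" and "i < l"
    and no_static: "\<forall>h b c. Static h b c \<notin> laws B"
    and "f \<in> fluents B"
    and caused_by_action: "\<And>x b c. Dynamic (Some (f, x)) b c \<in> laws B \<Longrightarrow> \<exists>a. BA a \<in> set b"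
  shows "acts i X \<noteq> {}"
proof -
  have "Rule {} {} ((\<lambda>v. Pos (FA (Suc i) f v)) ` fdom B f) \<in> prog l B"
    using prog_totalI \<open>i < l\<close> \<open>f \<in> fluents B\<close> by (metis Suc_leI)
  from stable_model_satisfies_rule[OF sm this] obtain x where "Pos (FA (Suc i) f x) \<in> X"
    by auto
  then obtain r where r: "r \<in> prog l B" "rpos r \<subseteq> X" "Pos (FA (Suc i) f x) \<in> rhead r"
    using stable_model_supported[OF sm] by metis
  then obtain b c where "Dynamic (Some (f, x)) b c \<in> laws B" "rpos r = belit i ` set b"
    using prog_head_Suc_fluent no_static by metis
  moreover from caused_by_action[OF this(1)] obtain a where "BA a \<in> set b" by blast
  ultimately have "Pos (AA i a) \<in> X" using r(2) by force
  then show ?thesis by (auto simp: acts_def)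
qed

lemma stable_model_acts_unique:
  assumes sm: "stable_model (prog l B) X" and "i < l"
    and exclusive: "\<And>t s. t \<in> actions B \<Longrightarrow> s \<in> actions B \<Longrightarrow> t \<noteq> s \<Longrightarrow>
      Dynamic None [BA t, BA s] [] \<in> laws B"
    and "t \<in> acts i X" "s \<in> acts i X"
  shows "t = s"
proof (rule ccontr)
  assume "t \<noteq> s"
  moreover have "t \<in> actions B" "s \<in> actions B"
    using stable_model_acts_subset[OF sm] \<open>t \<in> acts i X\<close> \<open>s \<in> acts i X\<close> by blast+
  ultimately have "Rule {} {Pos (AA i t), Pos (AA i s)} {} \<in> prog l B"
    using prog_dynamicI[OF \<open>i < l\<close> exclusive] by (simp add: fnegcl_def)
  from stable_model_satisfies_rule[OF sm this] show False
    using \<open>t \<in> acts i X\<close> \<open>s \<in> acts i X\<close> by (simp add: acts_def)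
qed

locale determined_initial_state =
  fixes B :: "('f, 'val, 'a) bcdesc" and init :: "'f \<Rightarrow> 'val"
  assumes no_static: "\<forall>h b c. Static h b c \<notin> laws B"
    and initially_iff: "Initially f x \<in> laws B \<longleftrightarrow> f \<in> fluents B \<and> x = init f"
    and init_in_fdom: "f \<in> fluents B \<Longrightarrow> init f \<in> fdom B f"
begin

definition initial_answer_set :: "('f, 'val, 'a) lit set" where
  "initial_answer_set = (\<lambda>f. Pos (FA 0 f (init f))) ` fluents B
     \<union> {Neg (FA 0 f v) | f v. f \<in> fluents B \<and> v \<in> fdom B f \<and> v \<noteq> init f}"

lemma stable_model_initial_answer_set: "stable_model (prog 0 B) initial_answer_set"
  unfolding stable_model_def
proof (intro conjI allI impI notI)
  show "consistent initial_answer_set"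
    unfolding consistent_def initial_answer_set_def by auto
  show "is_model (reduct (prog 0 B) initial_answer_set) initial_answer_set"
    unfolding is_model_reduct_iff
  proof (intro ballI impI)
    fix r assume r: "r \<in> prog 0 B" and neg: "rneg r \<inter> initial_answer_set = {}"
      and pos: "rpos r \<subseteq> initial_answer_set"
    from r no_static show "rhead r \<inter> initial_answer_set \<noteq> {}"
    proof (cases rule: prog_0_cases)
      case (total f)
      then show ?thesis using neg init_in_fdom by (auto simp: initial_answer_set_def)
    qed (use pos initially_iff in \<open>auto simp: initial_answer_set_def\<close>)
  qed
next
  fix Y assume "Y \<subset> initial_answer_set"
    and model: "is_model (reduct (prog 0 B) initial_answer_set) Y"
  have fact_in_Y: "rhead r \<inter> Y \<noteq> {}" if "r \<in> prog 0 B" "rneg r = {}" "rpos r = {}" for r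
    using model that unfolding is_model_reduct_iff by blast
  have "initial_answer_set \<subseteq> Y"
  proof
    fix a assume "a \<in> initial_answer_set"
    then consider f where "a = Pos (FA 0 f (init f))" "f \<in> fluents B"
      | f v where "a = Neg (FA 0 f v)" "f \<in> fluents B" "v \<in> fdom B f" "v \<noteq> init f"
      unfolding initial_answer_set_def by blast
    then show "a \<in> Y"
    proof cases
      case 1
      then show ?thesis
        using fact_in_Y[OF prog_initiallyI] initially_iff by auto
    next
      case 2
      then have "Pos (FA 0 f v) \<notin> Y"
        using \<open>Y \<subset> initial_answer_set\<close> by (auto simp: initial_answer_set_def)
      then show ?thesis using fact_in_Y[OF prog_choiceI[OF 2(2,3)]] 2(1) by auto
    qed
  qed
  with \<open>Y \<subset> initial_answer_set\<close> show False by blast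
qed

lemma sigma_0_stable_model:
  assumes sm: "stable_model (prog 0 B) X"
  shows "sigma 0 X = (\<lambda>f. (f, init f)) ` fluents B"
proof
  have init_in_X: "Pos (FA 0 f (init f)) \<in> X" if "f \<in> fluents B" for f
    using stable_model_satisfies_rule[OF sm prog_initiallyI] initially_iff that by auto
  then show "(\<lambda>f. (f, init f)) ` fluents B \<subseteq> sigma 0 X"
    by (auto simp: sigma_def)
  show "sigma 0 X \<subseteq> (\<lambda>f. (f, init f)) ` fluents B"
  proof safe
    fix f x assume "(f, x) \<in> sigma 0 X"
    then have fx_in_X: "Pos (FA 0 f x) \<in> X" by (simp add: sigma_def)
    then obtain r where r: "r \<in> prog 0 B" "Pos (FA 0 f x) \<in> rhead r"
      using stable_model_supported[OF sm] by metis
    from r(1) no_static have fx_dom: "f \<in> fluents B \<and> x \<in> fdom B f"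
      by (cases rule: prog_0_cases) (use r(2) initially_iff init_in_fdom in auto)
    moreover have "x = init f"
    proof (rule ccontr)
      assume "x \<noteq> init f"
      then have "Neg (FA 0 f x) \<in> X"
        using stable_model_satisfies_rule[OF sm prog_functionalI[of 0 0 f B x "init f"]]
          fx_dom init_in_fdom init_in_X \<open>x \<noteq> init f\<close> by auto
      with fx_in_X sm show False unfolding stable_model_def consistent_def by blast
    qed
    ultimately show "(f, x) \<in> (\<lambda>f. (f, init f)) ` fluents B" by blast
  qed
qed

lemma init_states_eq: "init_states B = {(\<lambda>f. (f, init f)) ` fluents B}"
  using stable_model_initial_answer_set sigma_0_stable_model
  unfolding init_states_def by blast

end

definition bc_init :: "('v, 'd, 'p, 't) dawnet \<Rightarrow> ('v, 'p) fluent \<Rightarrow> 'd fval" where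
  "bc_init W f = (case f of
     VarF v \<Rightarrow> Null | PlaceF p \<Rightarrow> BoolV (p = pstart W) | TransF \<Rightarrow> BoolV True)"

lemma bc_no_static: "\<forall>h b c. Static h b c \<notin> laws (bc W dnf)"
  by (simp add: bc_def bc_laws_def)

lemma bc_determined_initial_state:
  assumes "pstart W \<in> places W"
  shows "determined_initial_state (bc W dnf) (bc_init W)"
proof
  show "\<forall>h b c. Static h b c \<notin> laws (bc W dnf)" by (rule bc_no_static)
  show "Initially f x \<in> laws (bc W dnf) \<longleftrightarrow> f \<in> fluents (bc W dnf) \<and> x = bc_init W f" for f x
    using assms by (cases f) (auto simp: bc_def bc_laws_def bc_init_def)
  show "bc_init W f \<in> fdom (bc W dnf) f" for f
    by (cases f) (auto simp: bc_def bc_fdom_def bc_init_def)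
qed

lemma bc_trans_caused_by_action:
  "Dynamic (Some (TransF, x)) b c \<in> laws (bc W dnf) \<Longrightarrow> \<exists>t. BA t \<in> set b"
  by (auto simp: bc_def bc_laws_def)

lemma bc_actions_exclusive:
  "t \<in> actions (bc W dnf) \<Longrightarrow> s \<in> actions (bc W dnf) \<Longrightarrow> t \<noteq> s \<Longrightarrow>
    Dynamic None [BA t, BA s] [] \<in> laws (bc W dnf)"
  by (simp add: bc_def bc_laws_def)

lemma bc_card_acts_eq_1:
  assumes "stable_model (prog (Suc l) (bc W dnf)) X"
  shows "card (acts l X) = 1"
proof -
  have "TransF \<in> fluents (bc W dnf)" by (simp add: bc_def)
  then have "acts l X \<noteq> {}"
    using stable_model_acts_nonempty[OF assms _ bc_no_static] bc_trans_caused_by_action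
    by blast
  moreover have "t = s" if "t \<in> acts l X" "s \<in> acts l X" for t s
    using stable_model_acts_unique[OF assms _ bc_actions_exclusive] that by blast
  ultimately show ?thesis by (metis is_singletonI' is_singleton_altdef)
qed

theorem mainTheorem5:
  fixes W :: "('v,'d,'p,'t) dawnet"
    and dnf :: "'t \<Rightarrow> ('v,'d) dlit list list"
  assumes "daw_net W"
    and "one_safe W"
    and "valid_dnf W dnf"
  shows "(\<exists>s0. init_states (bc W dnf) = {s0}) \<and>
         (\<forall>s A s'. (s, A, s') \<in> ts_delta (bc W dnf) \<longrightarrow> card A = 1)"
proof
  have "pstart W \<in> places W" using \<open>daw_net W\<close> by (simp add: daw_net_def)
  then have "init_states (bc W dnf) = {(\<lambda>f. (f, bc_init W f)) ` fluents (bc W dnf)}"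
    by (rule determined_initial_state.init_states_eq[OF bc_determined_initial_state])
  then show "\<exists>s0. init_states (bc W dnf) = {s0}" by blast
  show "\<forall>s A s'. (s, A, s') \<in> ts_delta (bc W dnf) \<longrightarrow> card A = 1"
    unfolding ts_delta_def using bc_card_acts_eq_1 by fastforce
qed

end
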